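(* Every singleton congestion game structure $\mathcal G=(\mathcal R,c,\mathcal S)$ has a monotone equilibrium selection: for each demand vector $\mu\in\mathbb R_+^{\mathcal H}$ one can choose an equilibrium load vector $x(\mu)$ of $(\mathcal G,\mu)$ such that for every resource $r\in\mathcal R$ the map $\mu\mapsto x_r(\mu)$ is nondecreasing with respect to each component $\mu^h$, $h\in\mathcal H$.
   Context: A congestion game structure $\mathcal G=(\mathcal R,c,\mathcal S)$ consists of: a finite set $\mathcal R$ of resources, each $r\in\mathcal R$ with a continuous nondecreasing cost function $c_r:\mathbb R_+\to\mathbb R_+$; and a finite set $\mathcal H$ of commodities, each $h\in\mathcal H$ with a nonempty finite family $\mathcal S^h\subseteq 2^{\mathcal R}$ of feasible strategies. A demand vector $\mu=(\mu^h)_{h\in\mathcal H}\in\mathbb R_+^{\mathcal H}$ defines the game $(\mathcal G,\mu)$. A feasible flow is $f=(f^h_s)$ with $f^h_s\ge0$, $\sum_{s\in\mathcal S^h}f^h_s=\mu^h$; it induces loads $x_r=\sum_h\sum_{s\in\mathcal S^h:r\in s}f^h_s$ and strategy costs $c_s=\sum_{r\in s}c_r(x_r)$. A Wardrop equilibrium is a feasible flow such that for each $h$ there is $\lambda^h$ with $c_s=\lambda^h$ for all $s\in\mathcal S^h$ with $f^h_s>0$ and $c_s\ge\lambda^h$ for all $s\in\mathcal S^h$ with $f^h_s=0$; an equilibrium load vector is the load vector of a Wardrop equilibrium. The structure is a singleton congestion game if every feasible strategy is a single resource, so $\mathcal S^h$ can be identified with a nonempty subset $\mathcal R^h\subseteq\mathcal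 R$. A monotone equilibrium selection (MES) is a choice, for each $\mu\in\mathbb R_+^{\mathcal H}$, of an equilibrium load vector $x(\mu)$ such that each $\mu\mapsto x_r(\mu)$ is nondecreasing in each coordinate $\mu^h$. *)

theory Defs
  imports "HOL-Analysis.Analysis"
begin

definition congestion_game_structure ::
  "'r set \<Rightarrow> ('r \<Rightarrow> real \<Rightarrow> real) \<Rightarrow> 'h set \<Rightarrow> ('h \<Rightarrow> 'r set set) \<Rightarrow> bool" where
  "congestion_game_structure R c H S \<longleftrightarrow>
     finite R \<and> finite H \<and>
     (\<forall>r\<in>R. continuous_on {0..} (c r) \<and> mono_on {0..} (c r) \<and> (\<forall>y\<ge>0. c r y \<ge> 0)) \<and>
     (\<forall>h\<in>H. S h \<noteq> {} \<and> finite (S h) \<and> S h \<subseteq> Pow R)"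

definition singleton_game :: "'h set \<Rightarrow> ('h \<Rightarrow> 'r set set) \<Rightarrow> bool" where
  "singleton_game H S \<longleftrightarrow> (\<forall>h\<in>H. \<forall>s\<in>S h. \<exists>r. s = {r})"

definition demands :: "'h set \<Rightarrow> ('h \<Rightarrow> real) set" where
  "demands H = {\<mu>. (\<forall>h\<in>H. \<mu> h \<ge> 0) \<and> (\<forall>h. h \<notin> H \<longrightarrow> \<mu> h = 0)}"

definition feasible_flow ::
  "'h set \<Rightarrow> ('h \<Rightarrow> 'r set set) \<Rightarrow> ('h \<Rightarrow> real) \<Rightarrow> ('h \<Rightarrow> 'r set \<Rightarrow> real) \<Rightarrow> bool" where
  "feasible_flow H S \<mu> f \<longleftrightarrow>
     (\<forall>h\<in>H. (\<forall>s\<in>S h. f h s \<ge> 0) \<and> (\<Sum>s\<in>S h. f h s) = \<mu> h)"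

definition load :: "'h set \<Rightarrow> ('h \<Rightarrow> 'r set set) \<Rightarrow> ('h \<Rightarrow> 'r set \<Rightarrow> real) \<Rightarrow> 'r \<Rightarrow> real" where
  "load H S f r = (\<Sum>h\<in>H. \<Sum>s\<in>{s\<in>S h. r \<in> s}. f h s)"

definition strategy_cost ::
  "('r \<Rightarrow> real \<Rightarrow> real) \<Rightarrow> 'h set \<Rightarrow> ('h \<Rightarrow> 'r set set) \<Rightarrow> ('h \<Rightarrow> 'r set \<Rightarrow> real) \<Rightarrow> 'r set \<Rightarrow> real" where
  "strategy_cost c H S f s = (\<Sum>r\<in>s. c r (load H S f r))"

definition wardrop_equilibrium ::
  "('r \<Rightarrow> real \<Rightarrow> real) \<Rightarrow> 'h set \<Rightarrow> ('h \<Rightarrow> 'r set set) \<Rightarrow> ('h \<Rightarrow> real) \<Rightarrow> ('h \<Rightarrow> 'r set \<Rightarrow> real) \<Rightarrow> bool" where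
  "wardrop_equilibrium c H S \<mu> f \<longleftrightarrow>
     feasible_flow H S \<mu> f \<and>
     (\<forall>h\<in>H. \<exists>lam. \<forall>s\<in>S h.
        (f h s > 0 \<longrightarrow> strategy_cost c H S f s = lam) \<and>
        (f h s = 0 \<longrightarrow> strategy_cost c H S f s \<ge> lam))"

definition equilibrium_load ::
  "'r set \<Rightarrow> ('r \<Rightarrow> real \<Rightarrow> real) \<Rightarrow> 'h set \<Rightarrow> ('h \<Rightarrow> 'r set set) \<Rightarrow> ('h \<Rightarrow> real) \<Rightarrow> ('r \<Rightarrow> real) \<Rightarrow> bool" where
  "equilibrium_load R c H S \<mu> x \<longleftrightarrow>
     (\<exists>f. wardrop_equilibrium c H S \<mu> f \<and> (\<forall>r\<in>R. x r = load H S f r))"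

definition monotone_equilibrium_selection ::
  "'r set \<Rightarrow> ('r \<Rightarrow> real \<Rightarrow> real) \<Rightarrow> 'h set \<Rightarrow> ('h \<Rightarrow> 'r set set) \<Rightarrow> (('h \<Rightarrow> real) \<Rightarrow> 'r \<Rightarrow> real) \<Rightarrow> bool" where
  "monotone_equilibrium_selection R c H S x \<longleftrightarrow>
     (\<forall>\<mu>\<in>demands H. equilibrium_load R c H S \<mu> (x \<mu>)) \<and>
     (\<forall>\<mu>\<in>demands H. \<forall>h\<in>H. \<forall>t. \<mu> h \<le> t \<longrightarrow> (\<forall>r\<in>R. x \<mu> r \<le> x (\<mu>(h := t)) r))"

end

theory Submission
  imports Defs
begin

text \<open>Minimizers of the Beckmann potential (the sum over resources of the integral of the cost
  up to the load) over the feasible flows are Wardrop equilibria; among them select one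
  minimizing the squared norm of its load vector. Suppose the demands grow but the load on a
  resource \<open>a\<close> drops. Following commodities that move flow off one resource and onto another
  leads from \<open>a\<close> to a resource \<open>b\<close> whose load rises, and along this path the equilibrium costs
  order as \<open>c\<^sub>a \<le> c\<^sub>b\<close> before and \<open>c\<^sub>b \<le> c\<^sub>a\<close> after. Shifting a little flow along the path, from
  \<open>a\<close> to \<open>b\<close> in the old flow and back in the new one, therefore keeps both potential
  minimizers, while the two changes of the squared norm add up to a negative number,
  contradicting the choice of the selection.\<close>

lemma bounded_finite_coordinates_convergent_subseq:
  fixes X :: "nat \<Rightarrow> 'a \<Rightarrow> real"
  assumes "finite I" "\<And>n i. i \<in> I \<Longrightarrow> \<bar>X n i\<bar> \<le> B"
  shows "\<exists>\<sigma>. strict_mono \<sigma> \<and> (\<forall>i\<in>I. convergent (\<lambda>n. X (\<sigma> n) i))"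
  using assms
proof (induction I rule: finite_induct)
  case empty
  then show ?case by (auto intro: strict_mono_id)
next
  case (insert i J)
  then obtain \<sigma> where \<sigma>: "strict_mono \<sigma>" "\<forall>j\<in>J. convergent (\<lambda>n. X (\<sigma> n) j)" by auto
  have "bounded (range (\<lambda>n. X (\<sigma> n) i))"
    using insert.prems by (auto simp: bounded_iff)
  then obtain l \<tau> where \<tau>: "strict_mono \<tau>" "((\<lambda>n. X (\<sigma> n) i) \<circ> \<tau>) \<longlonglongrightarrow> l"
    using bounded_imp_convergent_subsequence by blast
  have "strict_mono (\<sigma> \<circ> \<tau>)" using \<sigma>(1) \<tau>(1) by (simp add: strict_mono_o)
  moreover have "convergent (\<lambda>n. X ((\<sigma> \<circ> \<tau>) n) i)"
    using \<tau>(2) by (auto simp: convergent_def o_def)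
  moreover have "convergent (\<lambda>n. X ((\<sigma> \<circ> \<tau>) n) j)" if "j \<in> J" for j
  proof -
    from \<sigma>(2) that obtain m where "(\<lambda>n. X (\<sigma> n) j) \<longlonglongrightarrow> m" by (auto simp: convergent_def)
    from LIMSEQ_subseq_LIMSEQ[OF this \<tau>(1)] show ?thesis by (auto simp: convergent_def o_def)
  qed
  ultimately show ?case by blast
qed

lemma seq_compact_attains_min:
  fixes \<phi> :: "('k \<Rightarrow> 's \<Rightarrow> real) \<Rightarrow> real"
  assumes "finite A" and "f0 \<in> K"
    and bounded: "\<And>f k s. f \<in> K \<Longrightarrow> (k, s) \<in> A \<Longrightarrow> \<bar>f k s\<bar> \<le> B"
    and closed: "\<And>X g. (\<And>n. X n \<in> K) \<Longrightarrow> (\<And>k s. (k, s) \<in> A \<Longrightarrow> (\<lambda>n. X n k s) \<longlonglongrightarrow> g k s)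
        \<Longrightarrow> (\<And>k s. (k, s) \<notin> A \<Longrightarrow> g k s = 0) \<Longrightarrow> g \<in> K"
    and continuous: "\<And>X g. (\<And>n. X n \<in> K) \<Longrightarrow> g \<in> K
        \<Longrightarrow> (\<And>k s. (k, s) \<in> A \<Longrightarrow> (\<lambda>n. X n k s) \<longlonglongrightarrow> g k s) \<Longrightarrow> (\<lambda>n. \<phi> (X n)) \<longlonglongrightarrow> \<phi> g"
    and bdd_below: "\<And>f. f \<in> K \<Longrightarrow> \<phi> f \<ge> 0"
  shows "\<exists>f\<in>K. \<forall>g\<in>K. \<phi> f \<le> \<phi> g"
proof -
  define m where "m = Inf (\<phi> ` K)"
  have m_le: "m \<le> \<phi> g" if "g \<in> K" for g
    unfolding m_def using that bdd_below by (intro cInf_lower bdd_belowI[of _ 0]) auto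
  have "\<exists>f\<in>K. \<phi> f < m + inverse (real (Suc n))" for n
    using cInf_lessD[of "\<phi> ` K" "m + inverse (real (Suc n))"] \<open>f0 \<in> K\<close> unfolding m_def by auto
  then obtain X where X: "\<And>n. X n \<in> K" "\<And>n. \<phi> (X n) < m + inverse (real (Suc n))"
    by metis
  obtain \<sigma> where \<sigma>: "strict_mono \<sigma>" "\<forall>p\<in>A. convergent (\<lambda>n. X (\<sigma> n) (fst p) (snd p))"
    using bounded_finite_coordinates_convergent_subseq[OF \<open>finite A\<close>,
        of "\<lambda>n p. X n (fst p) (snd p)" B] bounded X(1) by force
  define g where "g = (\<lambda>k s. if (k, s) \<in> A then lim (\<lambda>n. X (\<sigma> n) k s) else 0)"
  have conv: "(\<lambda>n. X (\<sigma> n) k s) \<longlonglongrightarrow> g k s" if "(k, s) \<in> A" for k s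
    using \<sigma>(2) that unfolding g_def by (force simp: convergent_LIMSEQ_iff)
  have "g \<in> K"
    by (rule closed[of "\<lambda>n. X (\<sigma> n)"]) (use X(1) conv in \<open>auto simp: g_def\<close>)
  have lim: "(\<lambda>n. \<phi> (X (\<sigma> n))) \<longlonglongrightarrow> \<phi> g"
    by (rule continuous) (use X(1) \<open>g \<in> K\<close> conv in auto)
  have "\<phi> g \<le> \<phi> h" if "h \<in> K" for h
  proof (rule LIMSEQ_le[OF lim])
    show "(\<lambda>n. \<phi> h + inverse (real (Suc n))) \<longlonglongrightarrow> \<phi> h"
      using tendsto_add[OF tendsto_const LIMSEQ_inverse_real_of_nat] by simp
    have "\<phi> (X (\<sigma> n)) \<le> \<phi> h + inverse (real (Suc n))" for n
    proof -
      have "inverse (real (Suc (\<sigma> n))) \<le> inverse (real (Suc n))"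
        using seq_suble[OF \<sigma>(1), of n] by (simp add: le_imp_inverse_le)
      then show ?thesis using X(2)[of "\<sigma> n"] m_le[OF that] by linarith
    qed
    then show "\<exists>N. \<forall>n\<ge>N. \<phi> (X (\<sigma> n)) \<le> \<phi> h + inverse (real (Suc n))"
      by blast
  qed
  then show ?thesis using \<open>g \<in> K\<close> by blast
qed

lemma mono_integral_increment_bounds:
  fixes c :: "real \<Rightarrow> real"
  assumes "continuous_on {0..} c" "mono_on {0..} c" "0 \<le> a" "a \<le> b"
  shows "(b - a) * c a \<le> integral {0..b} c - integral {0..a} c"
    and "integral {0..b} c - integral {0..a} c \<le> (b - a) * c b"
proof -
  have int: "c integrable_on {0..b}"
    by (rule integrable_continuous_interval) (rule continuous_on_subset[OF assms(1)], auto)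
  have eq: "integral {0..b} c - integral {0..a} c = integral {a..b} c"
    using Henstock_Kurzweil_Integration.integral_combine[OF assms(3,4) int] by simp
  have intab: "c integrable_on {a..b}"
    using integrable_subinterval_real[OF int] assms by auto
  have "integral {a..b} (\<lambda>_. c a) \<le> integral {a..b} c"
    by (rule integral_le) (use intab assms in \<open>auto intro!: mono_onD[OF assms(2)]\<close>)
  then show "(b - a) * c a \<le> integral {0..b} c - integral {0..a} c"
    using eq assms by simp
  have "integral {a..b} c \<le> integral {a..b} (\<lambda>_. c b)"
    by (rule integral_le) (use intab assms in \<open>auto intro!: mono_onD[OF assms(2)]\<close>)
  then show "integral {0..b} c - integral {0..a} c \<le> (b - a) * c b"
    using eq assms by simp
qed

lemma tendsto_integral_upper_limit:
  fixes c :: "real \<Rightarrow> real"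
  assumes "continuous_on {0..} c" "X \<longlonglongrightarrow> y" "\<And>n. X n \<ge> 0"
  shows "(\<lambda>n. integral {0..X n} c) \<longlonglongrightarrow> integral {0..y} c"
proof -
  have "y \<ge> 0" using assms(2,3) by (meson LIMSEQ_le_const)
  have "c integrable_on {0..y+1}"
    by (rule integrable_continuous_interval) (rule continuous_on_subset[OF assms(1)], auto)
  then have cont: "continuous_on {0..y+1} (\<lambda>x. integral {0..x} c)"
    by (rule indefinite_integral_continuous_1)
  have "\<forall>\<^sub>F n in sequentially. X n < y + 1" using order_tendstoD(2)[OF assms(2)] by simp
  then have "\<forall>\<^sub>F n in sequentially. X n \<in> {0..y+1}"
    by eventually_elim (use assms(3) in auto)
  then show ?thesis
    using continuous_on_tendsto_compose[OF cont assms(2)] \<open>y \<ge> 0\<close> by auto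
qed

lemma sum_shift_two:
  fixes Q :: "'a \<Rightarrow> real \<Rightarrow> real"
  assumes "finite R" "a \<in> R" "b \<in> R" "a \<noteq> b"
  shows "(\<Sum>r\<in>R. Q r (x r + t * (of_bool (r = b) - of_bool (r = a))))
    = (\<Sum>r\<in>R. Q r (x r)) + (Q a (x a - t) - Q a (x a)) + (Q b (x b + t) - Q b (x b))"
proof -
  have "\<forall>r\<in>R. Q r (x r + t * (of_bool (r = b) - of_bool (r = a)))
     = Q r (x r) + (if r = a then Q a (x a - t) - Q a (x a) else 0)
        + (if r = b then Q b (x b + t) - Q b (x b) else 0)"
    using assms by auto
  then show ?thesis
    using assms by (simp add: sum.distrib sum.delta)
qed

lemma load_add_scaled:
  "load H S (\<lambda>k s. f k s + t * d k s) r = load H S f r + t * load H S d r"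
  unfolding load_def by (simp add: sum.distrib sum_distrib_left)

locale singleton_congestion_game =
  fixes R :: "'r set" and c :: "'r \<Rightarrow> real \<Rightarrow> real" and H :: "'h set"
    and S :: "'h \<Rightarrow> 'r set set"
  assumes game_structure: "congestion_game_structure R c H S"
    and singleton: "singleton_game H S"
begin

lemma finite_R: "finite R" and finite_H: "finite H"
  and cost_continuous: "r \<in> R \<Longrightarrow> continuous_on {0..} (c r)"
  and cost_mono: "r \<in> R \<Longrightarrow> mono_on {0..} (c r)"
  and cost_nonneg: "r \<in> R \<Longrightarrow> y \<ge> 0 \<Longrightarrow> c r y \<ge> 0"
  and strategies_nonempty: "k \<in> H \<Longrightarrow> S k \<noteq> {}"
  and finite_strategies: "k \<in> H \<Longrightarrow> finite (S k)"
  using game_structure unfolding congestion_game_structure_def by auto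

lemma strategy_resource: "k \<in> H \<Longrightarrow> {r} \<in> S k \<Longrightarrow> r \<in> R"
  using game_structure unfolding congestion_game_structure_def by blast

lemma strategy_singleton: "k \<in> H \<Longrightarrow> s \<in> S k \<Longrightarrow> \<exists>r. s = {r}"
  using singleton unfolding singleton_game_def by auto

lemma load_singleton: "load H S f r = (\<Sum>k\<in>H. if {r} \<in> S k then f k {r} else 0)"
  unfolding load_def
proof (rule sum.cong[OF refl])
  fix k assume "k \<in> H"
  then have "{s \<in> S k. r \<in> s} = (if {r} \<in> S k then {{r}} else {})"
    using strategy_singleton by auto
  then show "(\<Sum>s\<in>{s \<in> S k. r \<in> s}. f k s) = (if {r} \<in> S k then f k {r} else 0)"
    by simp
qed

definition pairs :: "('h \<times> 'r set) set" where
  "pairs = Sigma H S"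

text \<open>Flows are normalised to vanish outside the strategy pairs, so that a flow is determined by
  finitely many coordinates.\<close>

definition flows :: "('h \<Rightarrow> real) \<Rightarrow> ('h \<Rightarrow> 'r set \<Rightarrow> real) set" where
  "flows \<mu> = {f. feasible_flow H S \<mu> f \<and> (\<forall>k s. (k, s) \<notin> pairs \<longrightarrow> f k s = 0)}"

definition cost_integral :: "'r \<Rightarrow> real \<Rightarrow> real" where
  "cost_integral r y = integral {0..y} (c r)"

definition potential :: "('h \<Rightarrow> 'r set \<Rightarrow> real) \<Rightarrow> real" where
  "potential f = (\<Sum>r\<in>R. cost_integral r (load H S f r))"

definition load_sqnorm :: "('h \<Rightarrow> 'r set \<Rightarrow> real) \<Rightarrow> real" where
  "load_sqnorm f = (\<Sum>r\<in>R. (load H S f r)\<^sup>2)"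

definition potential_minimizers :: "('h \<Rightarrow> real) \<Rightarrow> ('h \<Rightarrow> 'r set \<Rightarrow> real) set" where
  "potential_minimizers \<mu> = {f \<in> flows \<mu>. \<forall>g\<in>flows \<mu>. potential f \<le> potential g}"

definition selection :: "('h \<Rightarrow> real) \<Rightarrow> 'h \<Rightarrow> 'r set \<Rightarrow> real" where
  "selection \<mu> = (SOME f. f \<in> potential_minimizers \<mu> \<and>
     (\<forall>g\<in>potential_minimizers \<mu>. load_sqnorm f \<le> load_sqnorm g))"

lemma finite_pairs: "finite pairs"
  unfolding pairs_def using finite_H finite_strategies by auto

lemma flows_nonneg: "f \<in> flows \<mu> \<Longrightarrow> f k s \<ge> 0"
  unfolding flows_def feasible_flow_def pairs_def by (cases "k \<in> H \<and> s \<in> S k") auto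

lemma load_nonneg: "f \<in> flows \<mu> \<Longrightarrow> load H S f r \<ge> 0"
  unfolding load_singleton by (rule sum_nonneg) (auto intro: flows_nonneg)

lemma flows_nonempty:
  assumes "\<mu> \<in> demands H"
  shows "flows \<mu> \<noteq> {}"
proof -
  define choice where "choice k = (SOME s. s \<in> S k)" for k
  have choice: "choice k \<in> S k" if "k \<in> H" for k
    unfolding choice_def using strategies_nonempty[OF that] by (simp add: some_in_eq)
  define f where "f k s = (if k \<in> H \<and> s = choice k then \<mu> k else 0)" for k s
  have "f \<in> flows \<mu>"
    using assms choice finite_strategies
    by (auto simp: flows_def feasible_flow_def demands_def pairs_def f_def)
  then show ?thesis by blast
qed

lemma flows_bounded:
  assumes "\<mu> \<in> demands H" "f \<in> flows \<mu>" "(k, s) \<in> pairs"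
  shows "\<bar>f k s\<bar> \<le> (\<Sum>k\<in>H. \<mu> k)"
proof -
  have k: "k \<in> H" "s \<in> S k" using assms(3) unfolding pairs_def by auto
  have "f k s \<le> (\<Sum>s\<in>S k. f k s)"
    by (rule member_le_sum) (use k finite_strategies flows_nonneg[OF assms(2)] in auto)
  also have "\<dots> = \<mu> k" using assms(2) k unfolding flows_def feasible_flow_def by auto
  also have "\<dots> \<le> (\<Sum>k\<in>H. \<mu> k)"
    by (rule member_le_sum) (use assms(1) k finite_H in \<open>auto simp: demands_def\<close>)
  finally show ?thesis using flows_nonneg[OF assms(2)] by simp
qed

lemma flows_closed:
  assumes X: "\<And>n. X n \<in> flows \<mu>"
    and conv: "\<And>k s. (k, s) \<in> pairs \<Longrightarrow> (\<lambda>n. X n k s) \<longlonglongrightarrow> g k s"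
    and "\<And>k s. (k, s) \<notin> pairs \<Longrightarrow> g k s = 0"
  shows "g \<in> flows \<mu>"
  unfolding flows_def feasible_flow_def
proof (intro CollectI conjI ballI allI impI)
  fix k s assume "k \<in> H" "s \<in> S k"
  then show "0 \<le> g k s"
    by (intro LIMSEQ_le_const[OF conv]) (auto simp: pairs_def intro: flows_nonneg[OF X])
next
  fix k assume k: "k \<in> H"
  have "(\<lambda>n. \<Sum>s\<in>S k. X n k s) \<longlonglongrightarrow> (\<Sum>s\<in>S k. g k s)"
    by (intro tendsto_sum conv) (use k in \<open>auto simp: pairs_def\<close>)
  moreover have "(\<lambda>n. \<Sum>s\<in>S k. X n k s) = (\<lambda>n. \<mu> k)"
    using X k unfolding flows_def feasible_flow_def by auto
  ultimately have "(\<lambda>n. \<mu> k) \<longlonglongrightarrow> (\<Sum>s\<in>S k. g k s)" by simp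
  then show "(\<Sum>s\<in>S k. g k s) = \<mu> k" by (simp add: LIMSEQ_const_iff)
qed (fact assms(3))

lemma tendsto_load:
  assumes "\<And>k s. (k, s) \<in> pairs \<Longrightarrow> (\<lambda>n. X n k s) \<longlonglongrightarrow> g k s"
  shows "(\<lambda>n. load H S (X n) r) \<longlonglongrightarrow> load H S g r"
  unfolding load_def using assms unfolding pairs_def by (intro tendsto_sum) auto

lemma tendsto_potential:
  assumes "\<And>n. X n \<in> flows \<mu>" "\<And>k s. (k, s) \<in> pairs \<Longrightarrow> (\<lambda>n. X n k s) \<longlonglongrightarrow> g k s"
  shows "(\<lambda>n. potential (X n)) \<longlonglongrightarrow> potential g"
  unfolding potential_def cost_integral_def
  by (intro tendsto_sum tendsto_integral_upper_limit cost_continuous tendsto_load assms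
      load_nonneg[OF assms(1)])

lemma tendsto_load_sqnorm:
  assumes "\<And>k s. (k, s) \<in> pairs \<Longrightarrow> (\<lambda>n. X n k s) \<longlonglongrightarrow> g k s"
  shows "(\<lambda>n. load_sqnorm (X n)) \<longlonglongrightarrow> load_sqnorm g"
  unfolding load_sqnorm_def by (intro tendsto_sum tendsto_power tendsto_load assms)

lemma cost_integral_nonneg:
  assumes "r \<in> R" "y \<ge> 0"
  shows "cost_integral r y \<ge> 0"
proof -
  have "(y - 0) * c r 0 \<le> cost_integral r y - cost_integral r 0"
    unfolding cost_integral_def
    by (rule mono_integral_increment_bounds(1)[OF cost_continuous cost_mono]) (use assms in auto)
  then show ?thesis
    using mult_nonneg_nonneg[OF assms(2) cost_nonneg[OF assms(1), of 0]]
    by (simp add: cost_integral_def)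
qed

lemma potential_nonneg: "f \<in> flows \<mu> \<Longrightarrow> potential f \<ge> 0"
  unfolding potential_def by (intro sum_nonneg cost_integral_nonneg load_nonneg)

lemma potential_minimizers_nonempty:
  assumes "\<mu> \<in> demands H"
  shows "potential_minimizers \<mu> \<noteq> {}"
proof -
  obtain f0 where "f0 \<in> flows \<mu>" using flows_nonempty[OF assms] by blast
  then have "\<exists>f\<in>flows \<mu>. \<forall>g\<in>flows \<mu>. potential f \<le> potential g"
  proof (rule seq_compact_attains_min[OF finite_pairs])
    show "\<And>f k s. f \<in> flows \<mu> \<Longrightarrow> (k, s) \<in> pairs \<Longrightarrow> \<bar>f k s\<bar> \<le> (\<Sum>k\<in>H. \<mu> k)"
      by (rule flows_bounded[OF assms])
    show "\<And>X g. (\<And>n. X n \<in> flows \<mu>) \<Longrightarrow> g \<in> flows \<mu>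
        \<Longrightarrow> (\<And>k s. (k, s) \<in> pairs \<Longrightarrow> (\<lambda>n. X n k s) \<longlonglongrightarrow> g k s)
        \<Longrightarrow> (\<lambda>n. potential (X n)) \<longlonglongrightarrow> potential g"
      by (rule tendsto_potential)
  qed (fact flows_closed potential_nonneg)+
  then show ?thesis unfolding potential_minimizers_def by blast
qed

lemma potential_minimizers_closed:
  assumes X: "\<And>n. X n \<in> potential_minimizers \<mu>"
    and conv: "\<And>k s. (k, s) \<in> pairs \<Longrightarrow> (\<lambda>n. X n k s) \<longlonglongrightarrow> g k s"
    and "\<And>k s. (k, s) \<notin> pairs \<Longrightarrow> g k s = 0"
  shows "g \<in> potential_minimizers \<mu>"
proof -
  have XF: "\<And>n. X n \<in> flows \<mu>" using X unfolding potential_minimizers_def by auto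
  have "potential g \<le> potential h" if "h \<in> flows \<mu>" for h
    by (rule LIMSEQ_le_const2[OF tendsto_potential[OF XF conv]])
      (use X that in \<open>auto simp: potential_minimizers_def\<close>)
  then show ?thesis
    using flows_closed[OF XF conv] assms(3) unfolding potential_minimizers_def by auto
qed

lemma selection:
  assumes "\<mu> \<in> demands H"
  shows "selection \<mu> \<in> potential_minimizers \<mu>"
    and "g \<in> potential_minimizers \<mu> \<Longrightarrow> load_sqnorm (selection \<mu>) \<le> load_sqnorm g"
proof -
  obtain f0 where "f0 \<in> potential_minimizers \<mu>"
    using potential_minimizers_nonempty[OF assms] by blast
  then have "\<exists>f\<in>potential_minimizers \<mu>. \<forall>g\<in>potential_minimizers \<mu>. load_sqnorm f \<le> load_sqnorm g"
  proof (rule seq_compact_attains_min[OF finite_pairs])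
    show "\<And>f k s. f \<in> potential_minimizers \<mu> \<Longrightarrow> (k, s) \<in> pairs \<Longrightarrow> \<bar>f k s\<bar> \<le> (\<Sum>k\<in>H. \<mu> k)"
      using flows_bounded[OF assms] unfolding potential_minimizers_def by blast
    show "\<And>f. 0 \<le> load_sqnorm f"
      unfolding load_sqnorm_def by (simp add: sum_nonneg)
    show "\<And>X g. (\<And>n. X n \<in> potential_minimizers \<mu>) \<Longrightarrow> g \<in> potential_minimizers \<mu>
        \<Longrightarrow> (\<And>k s. (k, s) \<in> pairs \<Longrightarrow> (\<lambda>n. X n k s) \<longlonglongrightarrow> g k s)
        \<Longrightarrow> (\<lambda>n. load_sqnorm (X n)) \<longlonglongrightarrow> load_sqnorm g"
      by (rule tendsto_load_sqnorm)
  qed (fact potential_minimizers_closed)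
  then have "\<exists>f. f \<in> potential_minimizers \<mu> \<and>
      (\<forall>g\<in>potential_minimizers \<mu>. load_sqnorm f \<le> load_sqnorm g)"
    by blast
  then have "selection \<mu> \<in> potential_minimizers \<mu> \<and>
      (\<forall>g\<in>potential_minimizers \<mu>. load_sqnorm (selection \<mu>) \<le> load_sqnorm g)"
    unfolding selection_def by (rule someI_ex)
  then show "selection \<mu> \<in> potential_minimizers \<mu>"
    and "g \<in> potential_minimizers \<mu> \<Longrightarrow> load_sqnorm (selection \<mu>) \<le> load_sqnorm g"
    by auto
qed

definition unit_transfer :: "'r \<Rightarrow> 'r \<Rightarrow> ('h \<Rightarrow> 'r set \<Rightarrow> real) \<Rightarrow> bool" where
  "unit_transfer a b d \<longleftrightarrow> (\<forall>k s. d k s \<noteq> 0 \<longrightarrow> (k, s) \<in> pairs) \<and>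
     (\<forall>k\<in>H. (\<Sum>s\<in>S k. d k s) = 0) \<and>
     (\<forall>r. load H S d r = of_bool (r = b) - of_bool (r = a))"

definition shift :: "'h \<Rightarrow> 'r \<Rightarrow> 'r \<Rightarrow> 'h \<Rightarrow> 'r set \<Rightarrow> real" where
  "shift k a b k' s = of_bool (k' = k \<and> s = {b}) - of_bool (k' = k \<and> s = {a})"

lemma unit_transfer_shift:
  assumes "k \<in> H" "{a} \<in> S k" "{b} \<in> S k"
  shows "unit_transfer a b (shift k a b)"
  unfolding unit_transfer_def
proof (intro conjI allI ballI impI)
  fix k' s assume "shift k a b k' s \<noteq> 0"
  then show "(k', s) \<in> pairs"
    using assms by (auto simp: shift_def pairs_def of_bool_def split: if_splits)
next
  fix k' assume "k' \<in> H"
  show "(\<Sum>s\<in>S k'. shift k a b k' s) = 0"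
    using assms finite_strategies[of k]
    by (cases "k' = k") (simp_all add: shift_def sum_subtractf of_bool_def sum.delta)
next
  fix r
  have "load H S (shift k a b) r
      = (\<Sum>k'\<in>H. if k' = k then (if {r} \<in> S k then shift k a b k {r} else 0) else 0)"
    unfolding load_singleton by (rule sum.cong) (auto simp: shift_def)
  also have "\<dots> = (if {r} \<in> S k then shift k a b k {r} else 0)"
    using assms(1) finite_H by simp
  also have "\<dots> = of_bool (r = b) - of_bool (r = a)"
    using assms by (auto simp: shift_def)
  finally show "load H S (shift k a b) r = of_bool (r = b) - of_bool (r = a)" .
qed

lemma unit_transfer_add:
  assumes "unit_transfer a b d" "unit_transfer b q e"
  shows "unit_transfer a q (\<lambda>k s. d k s + e k s)"
  using assms load_add_scaled[of H S d 1 e] unfolding unit_transfer_def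
  by (auto simp: sum.distrib) (metis add.right_neutral)

lemma unit_transfer_reverse:
  assumes "unit_transfer a b d"
  shows "unit_transfer b a (\<lambda>k s. - d k s)"
  using assms unfolding unit_transfer_def load_def by (auto simp: sum_negf)

lemma load_transfer:
  assumes "unit_transfer a b d"
  shows "load H S (\<lambda>k s. f k s + t * d k s) r
    = load H S f r + t * (of_bool (r = b) - of_bool (r = a))"
  using assms unfolding unit_transfer_def by (simp add: load_add_scaled)

lemma transfer_in_flows:
  assumes f: "f \<in> flows \<mu>" and d: "unit_transfer a b d"
    and nonneg: "\<And>k s. (k, s) \<in> pairs \<Longrightarrow> f k s + t * d k s \<ge> 0"
  shows "(\<lambda>k s. f k s + t * d k s) \<in> flows \<mu>"
  unfolding flows_def feasible_flow_def
proof (intro CollectI conjI ballI allI impI)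
  fix k s assume "k \<in> H" "s \<in> S k"
  then show "0 \<le> f k s + t * d k s" using nonneg by (auto simp: pairs_def)
next
  fix k assume "k \<in> H"
  then show "(\<Sum>s\<in>S k. f k s + t * d k s) = \<mu> k"
    using f d by (simp add: sum.distrib flows_def feasible_flow_def unit_transfer_def
        flip: sum_distrib_left)
next
  fix k s assume "(k, s) \<notin> pairs"
  then show "f k s + t * d k s = 0" using f d unfolding flows_def unit_transfer_def by fastforce
qed

lemma exists_transfer_step:
  assumes f: "f \<in> flows \<mu>" and d: "unit_transfer a b d"
    and removes: "\<And>k s. d k s < 0 \<Longrightarrow> f k s > 0"
  obtains T where "T > 0" "\<And>t. 0 \<le> t \<Longrightarrow> t \<le> T \<Longrightarrow> (\<lambda>k s. f k s + t * d k s) \<in> flows \<mu>"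
proof
  define Q where "Q = insert 1 ((\<lambda>(k, s). f k s / - d k s) ` {p \<in> pairs. d (fst p) (snd p) < 0})"
  have "finite Q" unfolding Q_def using finite_pairs by simp
  have "q > 0" if "q \<in> Q" for q
    using that unfolding Q_def by (auto intro!: divide_pos_neg removes)
  then show "Min Q > 0" using \<open>finite Q\<close> by (simp add: Q_def)
  fix t assume t: "0 \<le> t" "t \<le> Min Q"
  show "(\<lambda>k s. f k s + t * d k s) \<in> flows \<mu>"
  proof (rule transfer_in_flows[OF f d])
    fix k s assume ks: "(k, s) \<in> pairs"
    show "f k s + t * d k s \<ge> 0"
    proof (cases "d k s < 0")
      case True
      then have "t \<le> f k s / - d k s"
        using t(2) Min_le[OF \<open>finite Q\<close>, of "f k s / - d k s"] ks unfolding Q_def by force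
      then have "t * - d k s \<le> f k s"
        using True pos_le_divide_eq[of "- d k s" t "f k s"] by simp
      then show ?thesis by simp
    next
      case False
      then show ?thesis using flows_nonneg[OF f, of k s] t(1) by simp
    qed
  qed
qed

lemma potential_transfer_le:
  assumes f: "f \<in> flows \<mu>" and d: "unit_transfer a b d"
    and "a \<in> R" "b \<in> R" "a \<noteq> b" "0 \<le> t" "t \<le> load H S f a"
  shows "potential (\<lambda>k s. f k s + t * d k s)
    \<le> potential f + t * (c b (load H S f b + t) - c a (load H S f a - t))"
proof -
  define x where "x = load H S f"
  have "x b \<ge> 0" unfolding x_def using load_nonneg[OF f] .
  have "potential (\<lambda>k s. f k s + t * d k s)
      = potential f + (cost_integral a (x a - t) - cost_integral a (x a))
        + (cost_integral b (x b + t) - cost_integral b (x b))"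
    unfolding potential_def load_transfer[OF d] x_def
    by (rule sum_shift_two[OF finite_R \<open>a \<in> R\<close> \<open>b \<in> R\<close> \<open>a \<noteq> b\<close>])
  moreover have "t * c a (x a - t) \<le> cost_integral a (x a) - cost_integral a (x a - t)"
    using mono_integral_increment_bounds(1)[OF cost_continuous cost_mono, of a "x a - t" "x a"]
      assms unfolding x_def cost_integral_def by simp
  moreover have "cost_integral b (x b + t) - cost_integral b (x b) \<le> t * c b (x b + t)"
    using mono_integral_increment_bounds(2)[OF cost_continuous cost_mono, of b "x b" "x b + t"]
      assms \<open>x b \<ge> 0\<close> unfolding cost_integral_def by simp
  ultimately show ?thesis unfolding x_def by (simp add: algebra_simps)
qed

lemma load_sqnorm_transfer:
  assumes "unit_transfer a b d" "a \<in> R" "b \<in> R" "a \<noteq> b"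
  shows "load_sqnorm (\<lambda>k s. f k s + t * d k s)
    = load_sqnorm f + 2 * t * (load H S f b - load H S f a + t)"
  unfolding load_sqnorm_def load_transfer[OF assms(1)]
  by (subst sum_shift_two[OF finite_R assms(2-4)]) (simp add: power2_eq_square algebra_simps)

lemma cost_continuous_at:
  assumes "r \<in> R" "x \<ge> 0" "\<gamma> > 0"
  obtains \<delta> where "\<delta> > 0" "\<And>y. y \<ge> 0 \<Longrightarrow> \<bar>y - x\<bar> < \<delta> \<Longrightarrow> \<bar>c r y - c r x\<bar> < \<gamma>"
  using cost_continuous[OF assms(1)] assms(2,3)
  unfolding continuous_on_iff dist_real_def by (metis atLeast_iff)

lemma minimizer_cost_le:
  assumes f: "f \<in> potential_minimizers \<mu>" and k: "k \<in> H" "{r} \<in> S k" "{r'} \<in> S k"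
    and used: "f k {r} > 0"
  shows "c r (load H S f r) \<le> c r' (load H S f r')"
proof (rule ccontr)
  define x where "x = load H S f"
  assume "\<not> ?thesis"
  then have gain: "c r' (x r') < c r (x r)" unfolding x_def by simp
  have fF: "f \<in> flows \<mu>" using f unfolding potential_minimizers_def by auto
  have "r \<noteq> r'" using gain by auto
  have "r \<in> R" "r' \<in> R" using strategy_resource k by auto
  have x0: "x \<rho> \<ge> 0" for \<rho> unfolding x_def using load_nonneg[OF fF] .
  define \<gamma> where "\<gamma> = (c r (x r) - c r' (x r')) / 2"
  have "\<gamma> > 0" using gain unfolding \<gamma>_def by simp
  obtain \<delta> \<delta>' where "\<delta> > 0" "\<delta>' > 0"
    and \<delta>: "\<And>y. y \<ge> 0 \<Longrightarrow> \<bar>y - x r\<bar> < \<delta> \<Longrightarrow> \<bar>c r y - c r (x r)\<bar> < \<gamma>"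
    and \<delta>': "\<And>y. y \<ge> 0 \<Longrightarrow> \<bar>y - x r'\<bar> < \<delta>' \<Longrightarrow> \<bar>c r' y - c r' (x r')\<bar> < \<gamma>"
    using cost_continuous_at[OF \<open>r \<in> R\<close> x0 \<open>\<gamma> > 0\<close>] cost_continuous_at[OF \<open>r' \<in> R\<close> x0 \<open>\<gamma> > 0\<close>]
    by metis
  have d: "unit_transfer r r' (shift k r r')" by (rule unit_transfer_shift[OF k])
  obtain T where "T > 0"
    and T: "\<And>t. 0 \<le> t \<Longrightarrow> t \<le> T \<Longrightarrow> (\<lambda>k' s. f k' s + t * shift k r r' k' s) \<in> flows \<mu>"
    by (rule exists_transfer_step[OF fF d])
      (use used \<open>r \<noteq> r'\<close> in \<open>auto simp: shift_def split: if_splits\<close>)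
  define t where "t = min T (min \<delta> \<delta>' / 2)"
  have t: "t > 0" "t \<le> T" "t < \<delta>" "t < \<delta>'"
    using \<open>T > 0\<close> \<open>\<delta> > 0\<close> \<open>\<delta>' > 0\<close> unfolding t_def by auto
  define g where "g = (\<lambda>k' s. f k' s + t * shift k r r' k' s)"
  have "g \<in> flows \<mu>" unfolding g_def using T t by simp
  then have "t \<le> x r"
    using load_nonneg[of g \<mu> r] load_transfer[OF d, of f t r] \<open>r \<noteq> r'\<close> unfolding g_def x_def by simp
  have "potential g \<le> potential f + t * (c r' (x r' + t) - c r (x r - t))"
    unfolding g_def x_def
    by (rule potential_transfer_le[OF fF d])
      (use \<open>r \<in> R\<close> \<open>r' \<in> R\<close> \<open>r \<noteq> r'\<close> t \<open>t \<le> x r\<close> x_def in auto)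
  moreover have "c r' (x r' + t) < c r (x r - t)"
  proof -
    have "\<bar>c r (x r - t) - c r (x r)\<bar> < \<gamma>" "\<bar>c r' (x r' + t) - c r' (x r')\<bar> < \<gamma>"
      using \<delta>[of "x r - t"] \<delta>'[of "x r' + t"] x0 t \<open>t \<le> x r\<close> by auto
    moreover have "c r (x r) - \<gamma> = c r' (x r') + \<gamma>" unfolding \<gamma>_def by (simp add: field_simps)
    ultimately show ?thesis by (simp add: abs_less_iff)
  qed
  ultimately have "potential g < potential f"
    using \<open>t > 0\<close> by (smt (verit) mult_pos_neg)
  then show False using f \<open>g \<in> flows \<mu>\<close> unfolding potential_minimizers_def by force
qed

lemma minimizer_wardrop:
  assumes f: "f \<in> potential_minimizers \<mu>"
  shows "wardrop_equilibrium c H S \<mu> f"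
  unfolding wardrop_equilibrium_def
proof (intro conjI ballI)
  show "feasible_flow H S \<mu> f"
    using f unfolding potential_minimizers_def flows_def by auto
  fix k assume k: "k \<in> H"
  define costs where "costs = strategy_cost c H S f ` S k"
  have "finite costs" "costs \<noteq> {}"
    unfolding costs_def using finite_strategies[OF k] strategies_nonempty[OF k] by auto
  show "\<exists>lam. \<forall>s\<in>S k. (0 < f k s \<longrightarrow> strategy_cost c H S f s = lam) \<and>
          (f k s = 0 \<longrightarrow> lam \<le> strategy_cost c H S f s)"
  proof (intro exI[of _ "Min costs"] ballI conjI impI)
    fix s assume s: "s \<in> S k"
    show min_le: "Min costs \<le> strategy_cost c H S f s"
      using \<open>finite costs\<close> s unfolding costs_def by simp
    assume "0 < f k s"
    obtain s' where s': "s' \<in> S k" "Min costs = strategy_cost c H S f s'"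
      using Min_in[OF \<open>finite costs\<close> \<open>costs \<noteq> {}\<close>] unfolding costs_def by auto
    obtain r r' where "s = {r}" "s' = {r'}"
      using strategy_singleton[OF k s] strategy_singleton[OF k s'(1)] by auto
    then have "strategy_cost c H S f s \<le> Min costs"
      using minimizer_cost_le[OF f k, of r r'] s s' \<open>0 < f k s\<close>
      by (simp add: strategy_cost_def)
    then show "strategy_cost c H S f s = Min costs" using min_le by simp
  qed
qed

lemma transfer_potential_minimizer:
  assumes f: "f \<in> potential_minimizers \<mu>" and d: "unit_transfer a b d"
    and g: "(\<lambda>k s. f k s + t * d k s) \<in> flows \<mu>"
    and "a \<in> R" "b \<in> R" "a \<noteq> b" "0 \<le> t" "t \<le> load H S f a"
    and cheaper: "c b (load H S f b + t) \<le> c a (load H S f a - t)"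
  shows "(\<lambda>k s. f k s + t * d k s) \<in> potential_minimizers \<mu>"
proof -
  have fF: "f \<in> flows \<mu>" using f unfolding potential_minimizers_def by auto
  have "potential (\<lambda>k s. f k s + t * d k s)
      \<le> potential f + t * (c b (load H S f b + t) - c a (load H S f a - t))"
    by (rule potential_transfer_le[OF fF d]) (use assms in auto)
  also have "\<dots> \<le> potential f"
    using cheaper \<open>0 \<le> t\<close> by (simp add: mult_nonneg_nonpos)
  finally show ?thesis using f g unfolding potential_minimizers_def by force
qed

definition exchange :: "('h \<Rightarrow> 'r set \<Rightarrow> real) \<Rightarrow> ('h \<Rightarrow> 'r set \<Rightarrow> real) \<Rightarrow> ('r \<times> 'r) set" where
  "exchange f f' = {(p, q). \<exists>k\<in>H. {p} \<in> S k \<and> {q} \<in> S k \<and> f' k {p} < f k {p} \<and> f k {q} < f' k {q}}"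

lemma exchange_closed_commodity_le:
  assumes f: "f \<in> flows \<mu>" and f': "f' \<in> flows \<mu>'" and k: "k \<in> H" and "\<mu> k \<le> \<mu>' k"
    and "finite T" and closed: "\<And>p q. p \<in> T \<Longrightarrow> (p, q) \<in> exchange f f' \<Longrightarrow> q \<in> T"
  shows "(\<Sum>r\<in>T. if {r} \<in> S k then f k {r} else 0) \<le> (\<Sum>r\<in>T. if {r} \<in> S k then f' k {r} else 0)"
proof -
  define \<delta> where "\<delta> r = f' k {r} - f k {r}" for r
  define Rk where "Rk = {r\<in>R. {r} \<in> S k}"
  have "finite Rk" unfolding Rk_def using finite_R by simp
  have "S k = (\<lambda>r. {r}) ` Rk"
    unfolding Rk_def using strategy_singleton[OF k] strategy_resource[OF k] by fastforce
  then have "(\<Sum>r\<in>Rk. \<delta> r) = (\<Sum>s\<in>S k. f' k s - f k s)"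
    by (simp add: sum.reindex inj_on_def \<delta>_def)
  also have "\<dots> = \<mu>' k - \<mu> k"
    using f f' k unfolding flows_def feasible_flow_def by (simp add: sum_subtractf)
  finally have total: "(\<Sum>r\<in>Rk. \<delta> r) \<ge> 0" using \<open>\<mu> k \<le> \<mu>' k\<close> by simp
  have "(\<Sum>r\<in>T. if {r} \<in> S k then f' k {r} else 0) - (\<Sum>r\<in>T. if {r} \<in> S k then f k {r} else 0)
      = (\<Sum>r\<in>T. if {r} \<in> S k then \<delta> r else 0)"
    unfolding \<delta>_def sum_subtractf[symmetric] by (rule sum.cong) auto
  also have "\<dots> = (\<Sum>r\<in>T \<inter> Rk. \<delta> r)"
    unfolding sum.inter_restrict[OF \<open>finite T\<close>]
    by (rule sum.cong) (auto simp: Rk_def intro: strategy_resource[OF k])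
  also have "\<dots> \<ge> 0"
  proof (cases "\<exists>p\<in>T \<inter> Rk. \<delta> p < 0")
    case True
    then obtain p where p: "p \<in> T" "p \<in> Rk" "\<delta> p < 0" by auto
    \<comment> \<open>flow leaves \<open>p \<in> T\<close>, so every resource gaining flow of commodity \<open>k\<close> lies in \<open>T\<close>\<close>
    have "\<delta> q \<le> 0" if "q \<in> Rk - T" for q
      using closed[OF p(1), of q] p that k unfolding exchange_def \<delta>_def Rk_def by force
    then have "(\<Sum>r\<in>Rk - T. \<delta> r) \<le> 0" by (rule sum_nonpos)
    moreover have "(\<Sum>r\<in>Rk. \<delta> r) = (\<Sum>r\<in>T \<inter> Rk. \<delta> r) + (\<Sum>r\<in>Rk - T. \<delta> r)"
      using sum.Int_Diff[OF \<open>finite Rk\<close>, of \<delta> T] by (simp add: Int_commute)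
    ultimately show ?thesis using total by linarith
  qed (auto intro: sum_nonneg simp: not_less)
  finally show ?thesis by simp
qed

lemma exchange_closed_load_le:
  assumes f: "f \<in> flows \<mu>" and f': "f' \<in> flows \<mu>'" and le: "\<And>k. k \<in> H \<Longrightarrow> \<mu> k \<le> \<mu>' k"
    and "finite T" and closed: "\<And>p q. p \<in> T \<Longrightarrow> (p, q) \<in> exchange f f' \<Longrightarrow> q \<in> T"
  shows "(\<Sum>r\<in>T. load H S f r) \<le> (\<Sum>r\<in>T. load H S f' r)"
  unfolding load_singleton
  by (subst (1 2) sum.swap, rule sum_mono, rule exchange_closed_commodity_le[OF f f'])
    (use le \<open>finite T\<close> closed in auto)

text \<open>The resources reachable from \<open>a\<close> by exchanges form a closed set, which cannot lose
  load in total.\<close>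

lemma exchange_path_to_load_increase:
  assumes f: "f \<in> flows \<mu>" and f': "f' \<in> flows \<mu>'" and le: "\<And>k. k \<in> H \<Longrightarrow> \<mu> k \<le> \<mu>' k"
    and "a \<in> R" and decrease: "load H S f' a < load H S f a"
  obtains b where "b \<in> R" "load H S f b < load H S f' b" "(a, b) \<in> (exchange f f')\<^sup>*"
proof -
  define T where "T = {r\<in>R. (a, r) \<in> (exchange f f')\<^sup>*}"
  have "finite T" unfolding T_def using finite_R by simp
  have closed: "q \<in> T" if "p \<in> T" "(p, q) \<in> exchange f f'" for p q
    using that strategy_resource unfolding T_def exchange_def
    by (auto intro: rtrancl_into_rtrancl)
  have "\<exists>b\<in>T. load H S f b < load H S f' b"
  proof (rule ccontr)
    assume "\<not> ?thesis"
    then have "(\<Sum>r\<in>T. load H S f' r) < (\<Sum>r\<in>T. load H S f r)"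
      using \<open>a \<in> R\<close> decrease by (intro sum_strict_mono_ex1[OF \<open>finite T\<close>]) (auto simp: T_def)
    then show False using exchange_closed_load_le[OF f f' le \<open>finite T\<close> closed] by simp
  qed
  then show ?thesis using that unfolding T_def by blast
qed

lemma exchange_path_costs:
  assumes f: "f \<in> potential_minimizers \<mu>" and f': "f' \<in> potential_minimizers \<mu>'"
    and "(a, b) \<in> (exchange f f')\<^sup>*"
  shows "c a (load H S f a) \<le> c b (load H S f b) \<and> c b (load H S f' b) \<le> c a (load H S f' a)"
  using \<open>(a, b) \<in> (exchange f f')\<^sup>*\<close>
proof (induction rule: rtrancl_induct)
  case base
  then show ?case by simp
next
  case (step p q)
  then obtain k where k: "k \<in> H" "{p} \<in> S k" "{q} \<in> S k"
    and moves: "f' k {p} < f k {p}" "f k {q} < f' k {q}"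
    unfolding exchange_def by auto
  have "f k {p} > 0" "f' k {q} > 0"
    using moves flows_nonneg[of f' \<mu>' k "{p}"] flows_nonneg[of f \<mu> k "{q}"] f f'
    unfolding potential_minimizers_def by auto
  then have "c p (load H S f p) \<le> c q (load H S f q)" "c q (load H S f' q) \<le> c p (load H S f' p)"
    using minimizer_cost_le[OF f k] minimizer_cost_le[OF f' k(1,3,2)] by auto
  then show ?case using step.IH by linarith
qed

lemma exchange_path_transfer:
  assumes "(a, b) \<in> (exchange f f')\<^sup>*"
  obtains d where "unit_transfer a b d"
    "\<And>k s. d k s < 0 \<Longrightarrow> f' k s < f k s" "\<And>k s. d k s > 0 \<Longrightarrow> f k s < f' k s"
proof -
  have "\<exists>d. unit_transfer a b d \<and> (\<forall>k s. d k s < 0 \<longrightarrow> f' k s < f k s)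
      \<and> (\<forall>k s. d k s > 0 \<longrightarrow> f k s < f' k s)"
    using assms
  proof (induction rule: rtrancl_induct)
    case base
    have "unit_transfer a a (\<lambda>k s. 0)" by (simp add: unit_transfer_def load_def)
    then show ?case by fastforce
  next
    case (step p q)
    then obtain d where d: "unit_transfer a p d"
      "\<forall>k s. d k s < 0 \<longrightarrow> f' k s < f k s" "\<forall>k s. d k s > 0 \<longrightarrow> f k s < f' k s"
      by blast
    from step.hyps(2) obtain k where k: "k \<in> H" "{p} \<in> S k" "{q} \<in> S k"
      and moves: "f' k {p} < f k {p}" "f k {q} < f' k {q}"
      unfolding exchange_def by auto
    have "unit_transfer a q (\<lambda>k' s. d k' s + shift k p q k' s)"
      by (rule unit_transfer_add[OF d(1) unit_transfer_shift[OF k]])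
    moreover have "f' k' s < f k' s" if "d k' s + shift k p q k' s < 0" for k' s
      using that d(2) moves by (cases "d k' s < 0") (auto simp: shift_def of_bool_def split: if_splits)
    moreover have "f k' s < f' k' s" if "d k' s + shift k p q k' s > 0" for k' s
      using that d(3) moves by (cases "d k' s > 0") (auto simp: shift_def of_bool_def split: if_splits)
    ultimately show ?case by blast
  qed
  then show ?thesis using that by blast
qed

lemma selection_mono:
  assumes \<mu>: "\<mu> \<in> demands H" and \<mu>': "\<mu>' \<in> demands H" and le: "\<And>k. k \<in> H \<Longrightarrow> \<mu> k \<le> \<mu>' k"
    and "a \<in> R"
  shows "load H S (selection \<mu>) a \<le> load H S (selection \<mu>') a"
proof (rule ccontr)
  define f f' where "f = selection \<mu>" and "f' = selection \<mu>'"
  define x x' where "x = load H S f" and "x' = load H S f'"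
  have fM: "f \<in> potential_minimizers \<mu>" and fM': "f' \<in> potential_minimizers \<mu>'"
    unfolding f_def f'_def using selection(1) \<mu> \<mu>' by auto
  then have fF: "f \<in> flows \<mu>" and fF': "f' \<in> flows \<mu>'"
    unfolding potential_minimizers_def by auto
  have x0: "x r \<ge> 0" "x' r \<ge> 0" for r unfolding x_def x'_def using load_nonneg fF fF' by auto
  assume "\<not> ?thesis"
  then have "x' a < x a" unfolding x_def x'_def f_def f'_def by simp
  then obtain b where "b \<in> R" "x b < x' b" and path: "(a, b) \<in> (exchange f f')\<^sup>*"
    using exchange_path_to_load_increase[OF fF fF' le \<open>a \<in> R\<close>] unfolding x_def x'_def by blast
  have "a \<noteq> b" using \<open>x' a < x a\<close> \<open>x b < x' b\<close> by auto
  have costs: "c a (x a) \<le> c b (x b)" "c b (x' b) \<le> c a (x' a)"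
    using exchange_path_costs[OF fM fM' path] unfolding x_def x'_def by auto
  obtain d where d: "unit_transfer a b d"
    and signs: "\<And>k s. d k s < 0 \<Longrightarrow> f' k s < f k s" "\<And>k s. d k s > 0 \<Longrightarrow> f k s < f' k s"
    using exchange_path_transfer[OF path] by blast
  have d': "unit_transfer b a (\<lambda>k s. - d k s)" by (rule unit_transfer_reverse[OF d])
  have "f k s > 0" if "d k s < 0" for k s
    using le_less_trans[OF flows_nonneg[OF fF'] signs(1)[OF that]] .
  then obtain T where "T > 0" and T: "\<And>t. 0 \<le> t \<Longrightarrow> t \<le> T \<Longrightarrow> (\<lambda>k s. f k s + t * d k s) \<in> flows \<mu>"
    using exists_transfer_step[OF fF d] by blast
  have "f' k s > 0" if "- d k s < 0" for k s
    using le_less_trans[OF flows_nonneg[OF fF] signs(2)] that by simp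
  then obtain T' where "T' > 0"
    and T': "\<And>t. 0 \<le> t \<Longrightarrow> t \<le> T' \<Longrightarrow> (\<lambda>k s. f' k s + t * - d k s) \<in> flows \<mu>'"
    using exists_transfer_step[OF fF' d'] by blast
  define t where "t = min (min T T') (min (x a - x' a) (x' b - x b)) / 2"
  have t: "0 < t" "t \<le> T" "t \<le> T'" "2 * t \<le> x a - x' a" "2 * t \<le> x' b - x b"
    using \<open>T > 0\<close> \<open>T' > 0\<close> \<open>x' a < x a\<close> \<open>x b < x' b\<close> unfolding t_def by auto
  have "(\<lambda>k s. f k s + t * d k s) \<in> potential_minimizers \<mu>"
  proof (rule transfer_potential_minimizer[OF fM d T])
    have "c b (x b + t) \<le> c b (x' b)" "c a (x' a) \<le> c a (x a - t)"
      using t x0[of a] x0[of b] by (auto intro!: mono_onD[OF cost_mono] \<open>a \<in> R\<close> \<open>b \<in> R\<close>)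
    then show "c b (load H S f b + t) \<le> c a (load H S f a - t)"
      using costs unfolding x_def by linarith
  qed (use t x0[of a] x0[of b] \<open>a \<in> R\<close> \<open>b \<in> R\<close> \<open>a \<noteq> b\<close> x_def in auto)
  then have "load_sqnorm f \<le> load_sqnorm (\<lambda>k s. f k s + t * d k s)"
    using selection(2)[OF \<mu>] unfolding f_def by blast
  then have "0 \<le> x b - x a + t"
    using load_sqnorm_transfer[OF d \<open>a \<in> R\<close> \<open>b \<in> R\<close> \<open>a \<noteq> b\<close>, of f t] t(1)
    unfolding x_def by (simp add: zero_le_mult_iff)
  have "(\<lambda>k s. f' k s + t * - d k s) \<in> potential_minimizers \<mu>'"
  proof (rule transfer_potential_minimizer[OF fM' d' T'])
    have "c a (x' a + t) \<le> c a (x a)" "c b (x b) \<le> c b (x' b - t)"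
      using t x0[of a] x0[of b] by (auto intro!: mono_onD[OF cost_mono] \<open>a \<in> R\<close> \<open>b \<in> R\<close>)
    then show "c a (load H S f' a + t) \<le> c b (load H S f' b - t)"
      using costs unfolding x'_def x_def by linarith
  qed (use t x0[of a] x0[of b] \<open>a \<in> R\<close> \<open>b \<in> R\<close> \<open>a \<noteq> b\<close> x'_def in auto)
  then have "load_sqnorm f' \<le> load_sqnorm (\<lambda>k s. f' k s + t * - d k s)"
    using selection(2)[OF \<mu>'] unfolding f'_def by blast
  then have "0 \<le> x' a - x' b + t"
    using load_sqnorm_transfer[OF d' \<open>b \<in> R\<close> \<open>a \<in> R\<close>, of f' t] \<open>a \<noteq> b\<close> t(1)
    unfolding x'_def by (simp add: zero_le_mult_iff)
  with \<open>0 \<le> x b - x a + t\<close> t show False by linarith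
qed

end

theorem theorem3p1:
  fixes R :: "'r set" and H :: "'h set" and c :: "'r \<Rightarrow> real \<Rightarrow> real"
    and S :: "'h \<Rightarrow> 'r set set"
  assumes "congestion_game_structure R c H S"
    and "singleton_game H S"
  shows "\<exists>x. monotone_equilibrium_selection R c H S x"
proof -
  interpret singleton_congestion_game R c H S by unfold_locales (rule assms)+
  have "monotone_equilibrium_selection R c H S (\<lambda>\<mu>. load H S (selection \<mu>))"
    unfolding monotone_equilibrium_selection_def
  proof (intro conjI ballI allI impI)
    fix \<mu> assume "\<mu> \<in> demands H"
    then show "equilibrium_load R c H S \<mu> (load H S (selection \<mu>))"
      unfolding equilibrium_load_def using minimizer_wardrop selection(1) by blast
  next
    fix \<mu> h t r assume "\<mu> \<in> demands H" "h \<in> H" "\<mu> h \<le> t" "r \<in> R"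
    moreover have "\<mu>(h := t) \<in> demands H"
      using \<open>\<mu> \<in> demands H\<close> \<open>h \<in> H\<close> \<open>\<mu> h \<le> t\<close> unfolding demands_def by auto
    ultimately show "load H S (selection \<mu>) r \<le> load H S (selection (\<mu>(h := t))) r"
      by (intro selection_mono) auto
  qed
  then show ?thesis by blast
qed

end
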